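(* Let $P$ be a Coxeter polytope with facet set $S$ and let $T_1,T_2\subset S$ be disjoint. If $T_1\cup T_2$ defines a face of $P$ and $T_1\subset T_2^\perp$, then each of $T_1\cup T_2^0$, $T_1\cup T_2^0\cup T_2^+$ and $T_1\cup T_2^0\cup T_2^-$ also defines a face of $P$.
   Context: A Cartan matrix on a finite set $S$: $A_{ss}=2$, $A_{st}\le0$ ($s\neq t$), $A_{st}=0\iff A_{ts}=0$, and $A_{st}A_{ts}\ge4$ or $=4\cos^2(\pi/k)$ for an integer $k\ge2$. A Coxeter polytope is a projective polytope $P\subset\mathbb{P}(V)$ with facet set $S$ and pairs $(\alpha_s,v_s)\in V^*\times V$ such that $A=A_P=(\alpha_s(v_t))_{s,t\in S}$ is a Cartan matrix and $\bigcap_s\{\alpha_s\le0\}$ is a cone lifting $P$. For $T\subset S$, $A_T=(A_{st})_{s,t\in T}$; the irreducible components of $T$ are the connected components of the graph on $T$ with edges $\{s,t\}$ where $A_{st}\neq0$. An irreducible Cartan matrix is of positive/zero/negative type according to the sign of its Perron–Frobenius eigenvalue (the simple real eigenvalue maximizing $|2-\mu|$ over eigenvalues $\mu$). $T^+$, $T^0$, $T^-$ denote the unions of the irreducible components of $T$ whose Cartan submatrices are of positive, zero, negative type respectively. $T^\perp=\{s\in S: A_{st}=0\ \text{for all } t\in T\}$. A subset $S'\subset S$ defines a face of $P$ if there exists $x\in V$ with $\alpha_s(x)=0$ for $s\in S'$ and $\alpha_s(x)<0$ for $s\notin S'$ (equivalently, $S'=S_f=\{s:f\subset\mathbb{P}(\ker\alpha_s)\}$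 for some face $f$, possibly empty or $\mathrm{Int}P$). *)

theory Defs
  imports "HOL-Analysis.Analysis"
begin

text \<open>Matrices indexed by the facet set are functions 's => 's => real;
  the Cartan submatrix A_T is A restricted to T x T.\<close>

definition cartan_matrix :: "'s set \<Rightarrow> ('s \<Rightarrow> 's \<Rightarrow> real) \<Rightarrow> bool" where
  "cartan_matrix S A \<longleftrightarrow>
     (\<forall>s\<in>S. A s s = 2) \<and>
     (\<forall>s\<in>S. \<forall>t\<in>S. s \<noteq> t \<longrightarrow> A s t \<le> 0) \<and>
     (\<forall>s\<in>S. \<forall>t\<in>S. A s t = 0 \<longleftrightarrow> A t s = 0) \<and>
     (\<forall>s\<in>S. \<forall>t\<in>S. s \<noteq> t \<longrightarrow>
        (A s t * A t s \<ge> 4 \<or> (\<exists>k::nat. k \<ge> 2 \<and> A s t * A t s = 4 * (cos (pi / real k))\<^sup>2)))"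

definition lift_cone :: "'s set \<Rightarrow> ('s \<Rightarrow> 'v \<Rightarrow> real) \<Rightarrow> 'v set" where
  "lift_cone S \<alpha> = {x. \<forall>s\<in>S. \<alpha> s x \<le> 0}"

definition cartan_of :: "('s \<Rightarrow> 'v \<Rightarrow> real) \<Rightarrow> ('s \<Rightarrow> 'v) \<Rightarrow> 's \<Rightarrow> 's \<Rightarrow> real" where
  "cartan_of \<alpha> v = (\<lambda>s t. \<alpha> s (v t))"

text \<open>Coxeter polytope in P(V), V a finite-dimensional real vector space, given by
  its lifting cone: the cone {alpha_s <= 0} is closed, convex, pointed (properly convex),
  has nonempty interior (so projects to a projective polytope P), and each s in S
  gives a distinct facet (the defining inequalities are irredundant).\<close>
definition coxeter_polytope ::
  "'s set \<Rightarrow> ('s \<Rightarrow> 'v::euclidean_space \<Rightarrow> real) \<Rightarrow> ('s \<Rightarrow> 'v) \<Rightarrow> bool" where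
  "coxeter_polytope S \<alpha> v \<longleftrightarrow>
     finite S \<and> S \<noteq> {} \<and>
     (\<forall>s\<in>S. linear (\<alpha> s)) \<and>
     cartan_matrix S (cartan_of \<alpha> v) \<and>
     interior (lift_cone S \<alpha>) \<noteq> {} \<and>
     lift_cone S \<alpha> \<inter> uminus ` lift_cone S \<alpha> = {0} \<and>
     (\<forall>s\<in>S. \<exists>x\<in>lift_cone S \<alpha>. \<alpha> s x = 0 \<and> (\<forall>t\<in>S - {s}. \<alpha> t x < 0))"

definition defines_face :: "'s set \<Rightarrow> ('s \<Rightarrow> 'v \<Rightarrow> real) \<Rightarrow> 's set \<Rightarrow> bool" where
  "defines_face S \<alpha> S' \<longleftrightarrow> S' \<subseteq> S \<and>
     (\<exists>x. (\<forall>s\<in>S'. \<alpha> s x = 0) \<and> (\<forall>s\<in>S - S'. \<alpha> s x < 0))"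

definition eigenvalue_on :: "('s \<Rightarrow> 's \<Rightarrow> real) \<Rightarrow> 's set \<Rightarrow> complex \<Rightarrow> bool" where
  "eigenvalue_on A C \<mu> \<longleftrightarrow>
     (\<exists>z::'s \<Rightarrow> complex. (\<exists>t\<in>C. z t \<noteq> 0) \<and>
        (\<forall>s\<in>C. (\<Sum>t\<in>C. complex_of_real (A s t) * z t) = \<mu> * z s))"

text \<open>Perron-Frobenius eigenvalue of an irreducible Cartan matrix A_C: 2 - rho, where
  rho = max |2 - mu| over eigenvalues mu (the Perron-Frobenius eigenvalue of 2I - A_C).\<close>
definition pf_eigenvalue :: "('s \<Rightarrow> 's \<Rightarrow> real) \<Rightarrow> 's set \<Rightarrow> real" where
  "pf_eigenvalue A C = 2 - Sup {cmod (2 - \<mu>) | \<mu>. eigenvalue_on A C \<mu>}"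

definition cartan_edges :: "('s \<Rightarrow> 's \<Rightarrow> real) \<Rightarrow> 's set \<Rightarrow> ('s \<times> 's) set" where
  "cartan_edges A T = {(s, t). s \<in> T \<and> t \<in> T \<and> (A s t \<noteq> 0 \<or> A t s \<noteq> 0)}"

definition irr_components :: "('s \<Rightarrow> 's \<Rightarrow> real) \<Rightarrow> 's set \<Rightarrow> 's set set" where
  "irr_components A T = (\<lambda>s. {t. (s, t) \<in> (cartan_edges A T)\<^sup>*}) ` T"

definition pos_part :: "('s \<Rightarrow> 's \<Rightarrow> real) \<Rightarrow> 's set \<Rightarrow> 's set" where
  "pos_part A T = \<Union>{C \<in> irr_components A T. pf_eigenvalue A C > 0}"

definition zero_part :: "('s \<Rightarrow> 's \<Rightarrow> real) \<Rightarrow> 's set \<Rightarrow> 's set" where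
  "zero_part A T = \<Union>{C \<in> irr_components A T. pf_eigenvalue A C = 0}"

definition neg_part :: "('s \<Rightarrow> 's \<Rightarrow> real) \<Rightarrow> 's set \<Rightarrow> 's set" where
  "neg_part A T = \<Union>{C \<in> irr_components A T. pf_eigenvalue A C < 0}"

definition perp :: "'s set \<Rightarrow> ('s \<Rightarrow> 's \<Rightarrow> real) \<Rightarrow> 's set \<Rightarrow> 's set" where
  "perp S A T = {s \<in> S. \<forall>t\<in>T. A s t = 0}"

end

theory Submission
  imports Defs "Jordan_Normal_Form.Determinant"
begin

(*
  Let U be a union of irreducible components of T2, so that A_st = 0 for s in (T1 u T2) - U and
  t in U. To remove U from the face T1 u T2 it suffices to find w in the span of the v_t, t in U,
  with alpha_s(w) < 0 for s in U: the alpha_s with s in (T1 u T2) - U vanish on every such v_t,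
  hence on w, and adding w to a large multiple of a point defining the face T1 u T2 gives a point
  defining (T1 u T2) - U. By Gordan's alternative such a w exists unless some nonzero y >= 0
  satisfies y A_U = 0. As the off-diagonal entries of A are <= 0, such a y is strictly positive on
  each irreducible component C meeting its support, with y A_C = 0. Then 0 is an eigenvalue of A_C,
  while weighting the eigenvector equation by y shows |2 - mu| <= 2 for every eigenvalue mu, so C is
  of zero type. Hence U can be removed as soon as none of its components is of zero type.
*)

definition nonneg_dependent_on :: "'i set \<Rightarrow> ('i \<Rightarrow> 'x \<Rightarrow> real) \<Rightarrow> 'x set \<Rightarrow> bool" where
  "nonneg_dependent_on I f H \<longleftrightarrow>
     (\<exists>y. (\<forall>i\<in>I. 0 \<le> y i) \<and> (\<exists>i\<in>I. y i \<noteq> 0) \<and> (\<forall>x\<in>H. (\<Sum>i\<in>I. y i * f i x) = 0))"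

lemma nonneg_dependent_on_mono:
  assumes "finite J" "I \<subseteq> J" "nonneg_dependent_on I f H"
  shows "nonneg_dependent_on J f H"
proof -
  obtain y i0 where y: "\<forall>i\<in>I. 0 \<le> y i" "i0 \<in> I" "y i0 \<noteq> 0" "\<forall>x\<in>H. (\<Sum>i\<in>I. y i * f i x) = 0"
    using assms(3) unfolding nonneg_dependent_on_def by blast
  let ?y = "\<lambda>i. if i \<in> I then y i else 0"
  have "(\<Sum>i\<in>J. ?y i * f i x) = (\<Sum>i\<in>I. y i * f i x)" for x
    using assms(1,2) by (intro sum.mono_neutral_cong_right) auto
  then show ?thesis
    unfolding nonneg_dependent_on_def using y assms(2) by (intro exI[of _ ?y]) auto
qed

lemma nonneg_dependent_on_singleton:
  assumes "\<forall>x\<in>H. f j x = 0"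
  shows "nonneg_dependent_on {j} f H"
  unfolding nonneg_dependent_on_def using assms by (intro exI[of _ "\<lambda>_. 1"]) auto

lemma exists_ray_point_all_negative:
  fixes f :: "'i \<Rightarrow> 'x::real_vector \<Rightarrow> real"
  assumes "finite I" "\<forall>i\<in>I. linear (f i)" "\<forall>i\<in>I. f i u < 0"
  shows "\<exists>c. \<forall>i\<in>I. f i (c *\<^sub>R u + z) < 0"
proof -
  have "eventually (\<lambda>c. f i (c *\<^sub>R u + z) < 0) at_top" if i: "i \<in> I" for i
    using eventually_gt_at_top[of "f i z / - f i u"]
  proof eventually_elim
    case (elim c)
    with i assms(3) have "f i z < c * - f i u" by (simp add: field_simps)
    with i assms(2) show ?case by (simp add: linear_add linear_scale)
  qed
  then have "eventually (\<lambda>c. \<forall>i\<in>I. f i (c *\<^sub>R u + z) < 0) at_top"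
    using assms(1) by (simp add: eventually_ball_finite)
  then show ?thesis by (auto simp: eventually_at_top_linorder)
qed

lemma linear_factors_through_kernel:
  fixes g \<phi> :: "'x::real_vector \<Rightarrow> real"
  assumes "subspace H" "linear g" "linear \<phi>" "z \<in> H" "g z \<noteq> 0"
    and "\<forall>h\<in>H. g h = 0 \<longrightarrow> \<phi> h = 0"
  shows "\<forall>h\<in>H. \<phi> h = (\<phi> z / g z) * g h"
proof
  fix h assume "h \<in> H"
  define h' where "h' = h - (g h / g z) *\<^sub>R z"
  have "h' \<in> H" using \<open>h \<in> H\<close> assms(1,4) by (simp add: h'_def subspace_diff subspace_scale)
  moreover have "g h' = 0" using assms(2,5) by (simp add: h'_def linear_diff linear_scale)
  ultimately have "\<phi> h' = 0" using assms(6) by blast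
  then show "\<phi> h = (\<phi> z / g z) * g h"
    using assms(3,5) by (simp add: h'_def linear_diff linear_scale field_simps)
qed

lemma exists_negative_in_subspace:
  fixes g :: "'x::real_vector \<Rightarrow> real"
  assumes "subspace H" "linear g" "\<not> (\<forall>h\<in>H. g h = 0)"
  shows "\<exists>z\<in>H. g z < 0"
proof -
  obtain h where h: "h \<in> H" "g h \<noteq> 0" using assms(3) by blast
  have "(- g h) *\<^sub>R h \<in> H" "g ((- g h) *\<^sub>R h) = - (g h)\<^sup>2"
    using h(1) assms(1,2) by (auto simp: subspace_neg subspace_scale linear_neg linear_scale power2_eq_square)
  then show ?thesis
    using h(2) by (metis neg_less_0_iff_less zero_less_power2)
qed

(* The dual case of the induction step of Gordan's alternative: a certificate on the hyperplane
   f j = 0 of H extends to H, and the point x forces the new coefficient to be nonnegative. *)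
lemma nonneg_dependent_on_insert_kernel:
  fixes f :: "'i \<Rightarrow> 'x::real_vector \<Rightarrow> real"
  assumes "finite I" "j \<notin> I" "linear (f j)" "\<forall>i\<in>I. linear (f i)" "subspace H"
    and "z \<in> H" "f j z < 0" "0 \<le> f j x" and "x \<in> H" "\<forall>i\<in>I. f i x < 0"
    and "nonneg_dependent_on I f (H \<inter> {h. f j h = 0})"
  shows "nonneg_dependent_on (insert j I) f H"
proof -
  obtain y i0 where y: "\<forall>i\<in>I. 0 \<le> y i" "i0 \<in> I" "y i0 \<noteq> 0"
    and y0: "\<forall>h\<in>H \<inter> {h. f j h = 0}. (\<Sum>i\<in>I. y i * f i h) = 0"
    using assms(11) unfolding nonneg_dependent_on_def by blast
  define \<phi> where "\<phi> = (\<lambda>h. \<Sum>i\<in>I. y i * f i h)"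
  define c where "c = \<phi> z / f j z"
  have "linear \<phi>"
    unfolding \<phi>_def using assms(4)
    by (intro linear_compose_sum ballI linear_compose[OF _ linear_times, unfolded o_def]) auto
  then have \<phi>: "\<forall>h\<in>H. \<phi> h = c * f j h"
    unfolding c_def using assms(3,5,6,7) y0
    by (intro linear_factors_through_kernel) (auto simp: \<phi>_def)
  have "\<phi> x < (\<Sum>i\<in>I. 0)"
    unfolding \<phi>_def using assms(1,10) y
    by (intro sum_strict_mono_ex1 bexI[of _ i0])
      (auto simp: mult_nonneg_nonpos less_imp_le intro!: mult_pos_neg)
  then have "c * f j x < 0" using \<phi> assms(9) by simp
  then have "c \<le> 0" using assms(8) by (auto simp: mult_less_0_iff)
  have "\<forall>h\<in>H. (\<Sum>i\<in>insert j I. (y(j := - c)) i * f i h) = 0"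
  proof
    fix h assume "h \<in> H"
    have "(\<Sum>i\<in>I. (y(j := - c)) i * f i h) = \<phi> h"
      unfolding \<phi>_def using assms(2) by (intro sum.cong) auto
    then show "(\<Sum>i\<in>insert j I. (y(j := - c)) i * f i h) = 0"
      using \<phi> \<open>h \<in> H\<close> assms(1,2) by simp
  qed
  then show ?thesis
    unfolding nonneg_dependent_on_def using y \<open>c \<le> 0\<close> assms(2)
    by (intro exI[of _ "y(j := - c)"]) auto
qed

lemma gordan_alternative:
  fixes f :: "'i \<Rightarrow> 'x::real_vector \<Rightarrow> real"
  assumes "finite I" "\<forall>i\<in>I. linear (f i)" "subspace H"
  shows "(\<exists>x\<in>H. \<forall>i\<in>I. f i x < 0) \<or> nonneg_dependent_on I f H"
  using assms
proof (induction I arbitrary: H rule: finite_induct)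
  case empty
  then show ?case using subspace_0 by blast
next
  case (insert j I)
  have fin: "finite (insert j I)" using insert.hyps by simp
  have linI: "\<forall>i\<in>I. linear (f i)" and linj: "linear (f j)" using insert.prems by auto
  show ?case
  proof (rule ccontr)
    assume neither: "\<not> ?case"
    then have "\<not> nonneg_dependent_on I f H"
      using nonneg_dependent_on_mono[OF fin subset_insertI] by blast
    then obtain x where x: "x \<in> H" "\<forall>i\<in>I. f i x < 0"
      using insert.IH[OF linI insert.prems(2)] by blast
    then have "0 \<le> f j x" using neither by (auto simp: not_less[symmetric])
    have "\<not> (\<forall>h\<in>H. f j h = 0)"
      using neither nonneg_dependent_on_mono[OF fin _ nonneg_dependent_on_singleton] by blast
    then obtain z where z: "z \<in> H" "f j z < 0"
      using exists_negative_in_subspace[OF insert.prems(2) linj] by blast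
    define H' where "H' = H \<inter> {h. f j h = 0}"
    have "\<not> nonneg_dependent_on I f H'"
      using neither nonneg_dependent_on_insert_kernel[OF insert.hyps linj linI insert.prems(2) z
          \<open>0 \<le> f j x\<close> x] by (auto simp: H'_def)
    moreover have "subspace H'"
      unfolding H'_def using insert.prems(2) linj
      by (intro subspace_inter) (auto simp: linear_subspace_kernel)
    ultimately obtain u where u: "u \<in> H'" "\<forall>i\<in>I. f i u < 0"
      using insert.IH[OF linI] by blast
    then obtain c where "\<forall>i\<in>I. f i (c *\<^sub>R u + z) < 0"
      using exists_ray_point_all_negative[OF insert.hyps(1) linI] by blast
    moreover have "c *\<^sub>R u + z \<in> H" "f j (c *\<^sub>R u + z) < 0"
      using u z insert.prems(2) linj
      by (auto simp: H'_def subspace_add subspace_scale linear_add linear_scale)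
    ultimately show False using neither by auto
  qed
qed

lemma defines_face_diff:
  fixes \<alpha> :: "'s \<Rightarrow> 'v::real_vector \<Rightarrow> real"
  assumes "finite S" "\<forall>s\<in>S. linear (\<alpha> s)" "defines_face S \<alpha> F" "U \<subseteq> F"
    and "\<forall>s\<in>F - U. \<alpha> s w = 0" "\<forall>s\<in>U. \<alpha> s w < 0"
  shows "defines_face S \<alpha> (F - U)"
proof -
  obtain x where F: "F \<subseteq> S" "\<forall>s\<in>F. \<alpha> s x = 0" "\<forall>s\<in>S - F. \<alpha> s x < 0"
    using assms(3) unfolding defines_face_def by blast
  obtain c where c: "\<forall>s\<in>S - F. \<alpha> s (c *\<^sub>R x + w) < 0"
    using exists_ray_point_all_negative[of "S - F" \<alpha> x w] assms(1,2) F(3) by auto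
  have "\<alpha> s (c *\<^sub>R x + w) = \<alpha> s w" if "s \<in> F" for s
    using that F assms(2) by (auto simp: linear_add linear_scale)
  then show ?thesis
    unfolding defines_face_def using F(1) c assms(4-6)
    by (intro conjI exI[of _ "c *\<^sub>R x + w"]) auto
qed

lemma mat_left_null_imp_right_null:
  fixes M :: "'a::idom mat"
  assumes "M \<in> carrier_mat n n" "y \<in> carrier_vec n" "y \<noteq> 0\<^sub>v n" "transpose_mat M *\<^sub>v y = 0\<^sub>v n"
  shows "\<exists>z\<in>carrier_vec n. z \<noteq> 0\<^sub>v n \<and> M *\<^sub>v z = 0\<^sub>v n"
proof -
  have "det (transpose_mat M) = 0"
    using assms det_0_iff_vec_prod_zero[of "transpose_mat M" n] by auto
  then have "det M = 0" using det_transpose[OF assms(1)] by simp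
  then show ?thesis using det_0_iff_vec_prod_zero[OF assms(1)] by blast
qed

lemma left_null_vector_imp_right_null_vector:
  fixes M :: "'s \<Rightarrow> 's \<Rightarrow> real"
  assumes "finite C" "\<exists>t\<in>C. y t \<noteq> 0" "\<forall>t\<in>C. (\<Sum>s\<in>C. y s * M s t) = 0"
  shows "\<exists>z. (\<exists>t\<in>C. z t \<noteq> 0) \<and> (\<forall>s\<in>C. (\<Sum>t\<in>C. M s t * z t) = 0)"
proof -
  define n where "n = card C"
  obtain g where g: "bij_betw g {0..<n} C"
    using ex_bij_betw_nat_finite[OF assms(1)] n_def by blast
  then have gC: "g i \<in> C" if "i < n" for i using that by (auto simp: bij_betw_def)
  have reindex: "(\<Sum>i\<in>{0..<n}. h (g i)) = (\<Sum>s\<in>C. h s)" for h :: "'s \<Rightarrow> real"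
    by (rule sum.reindex_bij_betw[OF g])
  have surj: "\<exists>i<n. g i = s" if "s \<in> C" for s using g that by (auto simp: bij_betw_def)
  define Mm where "Mm = mat n n (\<lambda>(i, j). M (g i) (g j))"
  define yv where "yv = vec n (\<lambda>i. y (g i))"
  have "transpose_mat Mm *\<^sub>v yv = 0\<^sub>v n"
  proof (rule eq_vecI)
    fix j assume "j < dim_vec (0\<^sub>v n :: real vec)"
    then have j: "j < n" by simp
    have "(transpose_mat Mm *\<^sub>v yv) $ j = (\<Sum>s\<in>C. y s * M s (g j))"
      using j reindex[of "\<lambda>s. y s * M s (g j)"]
      by (simp add: Mm_def yv_def mult_mat_vec_def scalar_prod_def mult.commute)
    then show "(transpose_mat Mm *\<^sub>v yv) $ j = 0\<^sub>v n $ j" using assms(3) gC[OF j] j by simp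
  qed (simp add: Mm_def yv_def)
  moreover have "yv \<noteq> 0\<^sub>v n"
  proof
    obtain t i where "y t \<noteq> 0" "i < n" "g i = t" using assms(2) surj by blast
    moreover assume "yv = 0\<^sub>v n"
    then have "yv $ i = 0\<^sub>v n $ i" by simp
    ultimately show False by (simp add: yv_def)
  qed
  ultimately obtain zv where zv: "zv \<in> carrier_vec n" "zv \<noteq> 0\<^sub>v n" "Mm *\<^sub>v zv = 0\<^sub>v n"
    using mat_left_null_imp_right_null[of Mm n yv] by (auto simp: Mm_def yv_def)
  define z where "z = (\<lambda>t. zv $ the_inv_into {0..<n} g t)"
  have zg: "z (g j) = zv $ j" if "j < n" for j
    using g that by (simp add: z_def the_inv_into_f_f bij_betw_def)
  have "\<exists>t\<in>C. z t \<noteq> 0"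
    using zv(1,2) zg gC by (metis eq_vecI carrier_vecD index_zero_vec)
  moreover have "(\<Sum>t\<in>C. M s t * z t) = 0" if s: "s \<in> C" for s
  proof -
    obtain i where i: "i < n" "g i = s" using surj[OF s] by blast
    have "(\<Sum>t\<in>C. M s t * z t) = (\<Sum>j\<in>{0..<n}. M (g i) (g j) * zv $ j)"
      using reindex[of "\<lambda>t. M s t * z t"] zg i by simp
    also have "\<dots> = (Mm *\<^sub>v zv) $ i"
      using i zv(1) by (simp add: Mm_def mult_mat_vec_def scalar_prod_def)
    finally show ?thesis using zv(3) i by simp
  qed
  ultimately show ?thesis by blast
qed

lemma eigenvector_entry_bound:
  fixes A :: "'s \<Rightarrow> 's \<Rightarrow> real"
  assumes "finite C" "s \<in> C" "A s s = 2"
    and "\<forall>t\<in>C. t \<noteq> s \<longrightarrow> A s t \<le> 0"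
    and "\<forall>s\<in>C. (\<Sum>t\<in>C. complex_of_real (A s t) * z t) = \<mu> * z s"
  shows "cmod (2 - \<mu>) * cmod (z s) \<le> (\<Sum>t\<in>C. ((if t = s then 2 else 0) - A s t) * cmod (z t))"
proof -
  let ?B = "\<lambda>t. (if t = s then 2 else 0) - A s t"
  have "(2 - \<mu>) * z s = (\<Sum>t\<in>C. (if t = s then 2 * z t else 0)) - (\<Sum>t\<in>C. complex_of_real (A s t) * z t)"
    using assms(1,2,5) by (simp add: algebra_simps)
  also have "\<dots> = (\<Sum>t\<in>C. complex_of_real (?B t) * z t)"
    unfolding sum_subtractf[symmetric] by (intro sum.cong) (auto simp: algebra_simps)
  finally have "cmod (2 - \<mu>) * cmod (z s) = cmod (\<Sum>t\<in>C. complex_of_real (?B t) * z t)"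
    by (metis norm_mult)
  also have "\<dots> \<le> (\<Sum>t\<in>C. cmod (complex_of_real (?B t) * z t))"
    by (rule norm_sum)
  also have "\<dots> = (\<Sum>t\<in>C. ?B t * cmod (z t))"
    using assms(3,4) by (intro sum.cong) (auto simp: norm_mult)
  finally show ?thesis .
qed

lemma cmod_2_minus_eigenvalue_le_2:
  fixes A :: "'s \<Rightarrow> 's \<Rightarrow> real"
  assumes "finite C" "\<forall>s\<in>C. A s s = 2" "\<forall>s\<in>C. \<forall>t\<in>C. s \<noteq> t \<longrightarrow> A s t \<le> 0"
    and "\<forall>s\<in>C. 0 < y s" "\<forall>t\<in>C. (\<Sum>s\<in>C. y s * A s t) = 0"
    and "eigenvalue_on A C \<mu>"
  shows "cmod (2 - \<mu>) \<le> 2"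
proof -
  obtain z where z: "\<exists>t\<in>C. z t \<noteq> 0" "\<forall>s\<in>C. (\<Sum>t\<in>C. complex_of_real (A s t) * z t) = \<mu> * z s"
    using assms(6) unfolding eigenvalue_on_def by blast
  define B where "B = (\<lambda>s t. (if t = s then 2 else 0) - A s t)"
  define W where "W = (\<Sum>t\<in>C. y t * cmod (z t))"
  obtain t0 where "t0 \<in> C" "z t0 \<noteq> 0" using z(1) by blast
  then have "0 < W"
    unfolding W_def using assms(1,4) by (intro sum_pos2[of C t0]) (auto simp: less_imp_le)
  have "cmod (2 - \<mu>) * W = (\<Sum>s\<in>C. y s * (cmod (2 - \<mu>) * cmod (z s)))"
    unfolding W_def by (simp add: sum_distrib_left algebra_simps)
  also have "\<dots> \<le> (\<Sum>s\<in>C. y s * (\<Sum>t\<in>C. B s t * cmod (z t)))"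
    unfolding B_def using assms(1-4) z(2)
    by (intro sum_mono mult_left_mono eigenvector_entry_bound) (auto simp: less_imp_le)
  also have "\<dots> = (\<Sum>s\<in>C. \<Sum>t\<in>C. y s * B s t * cmod (z t))"
    by (simp add: sum_distrib_left mult.assoc)
  also have "\<dots> = (\<Sum>t\<in>C. (\<Sum>s\<in>C. y s * B s t) * cmod (z t))"
    by (subst sum.swap) (simp add: sum_distrib_right)
  also have "\<dots> = 2 * W"
  proof -
    have "(\<Sum>s\<in>C. y s * B s t) = 2 * y t" if "t \<in> C" for t
    proof -
      have "(\<Sum>s\<in>C. y s * B s t) = (\<Sum>s\<in>C. (if t = s then 2 * y s else 0)) - (\<Sum>s\<in>C. y s * A s t)"
        unfolding sum_subtractf[symmetric] by (intro sum.cong) (auto simp: B_def algebra_simps)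
      then show ?thesis using that assms(1,5) by simp
    qed
    then show ?thesis unfolding W_def by (simp add: sum_distrib_left mult.assoc)
  qed
  finally show ?thesis using \<open>0 < W\<close> by simp
qed

lemma pf_eigenvalue_eq_0_if_positive_left_null_vector:
  fixes A :: "'s \<Rightarrow> 's \<Rightarrow> real"
  assumes "finite C" "C \<noteq> {}" "\<forall>s\<in>C. A s s = 2" "\<forall>s\<in>C. \<forall>t\<in>C. s \<noteq> t \<longrightarrow> A s t \<le> 0"
    and "\<forall>s\<in>C. 0 < y s" "\<forall>t\<in>C. (\<Sum>s\<in>C. y s * A s t) = 0"
  shows "pf_eigenvalue A C = 0"
proof -
  obtain t0 where "t0 \<in> C" using assms(2) by blast
  then have "\<exists>t\<in>C. y t \<noteq> 0" using assms(5) by force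
  then obtain z where z: "\<exists>t\<in>C. z t \<noteq> 0" "\<forall>s\<in>C. (\<Sum>t\<in>C. A s t * z t) = 0"
    using left_null_vector_imp_right_null_vector[OF assms(1) _ assms(6)] by blast
  have "eigenvalue_on A C 0"
    unfolding eigenvalue_on_def using z
    by (intro exI[of _ "\<lambda>t. complex_of_real (z t)"]) (simp flip: of_real_mult of_real_sum)
  then have "2 \<in> {cmod (2 - \<mu>) | \<mu>. eigenvalue_on A C \<mu>}" by force
  then have "Sup {cmod (2 - \<mu>) | \<mu>. eigenvalue_on A C \<mu>} = 2"
    by (rule cSup_eq_maximum) (use cmod_2_minus_eigenvalue_le_2[OF assms(1,3-6)] in blast)
  then show ?thesis unfolding pf_eigenvalue_def by simp
qed

definition irr_component :: "('s \<Rightarrow> 's \<Rightarrow> real) \<Rightarrow> 's set \<Rightarrow> 's \<Rightarrow> 's set" where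
  "irr_component A T s = {t. (s, t) \<in> (cartan_edges A T)\<^sup>*}"

lemma irr_component_self: "s \<in> irr_component A T s"
  by (simp add: irr_component_def)

lemma irr_component_subset:
  assumes "s \<in> T"
  shows "irr_component A T s \<subseteq> T"
proof
  fix t assume "t \<in> irr_component A T s"
  then have "(s, t) \<in> (cartan_edges A T)\<^sup>*" by (simp add: irr_component_def)
  then show "t \<in> T" using assms by (induction rule: rtrancl_induct) (auto simp: cartan_edges_def)
qed

lemma irr_component_edge:
  "t \<in> irr_component A T s \<Longrightarrow> (t, u) \<in> cartan_edges A T \<Longrightarrow> u \<in> irr_component A T s"
  by (simp add: irr_component_def rtrancl_into_rtrancl)

lemma sym_cartan_edges: "sym (cartan_edges A T)"
  by (auto simp: sym_def cartan_edges_def)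

lemma irr_component_sym:
  assumes "t \<in> irr_component A T s"
  shows "s \<in> irr_component A T t"
proof -
  have "sym ((cartan_edges A T)\<^sup>*)"
    by (intro sym_rtrancl sym_cartan_edges)
  then show ?thesis
    using assms by (simp add: irr_component_def sym_def)
qed

lemma irr_component_eq:
  assumes "t \<in> irr_component A T s"
  shows "irr_component A T t = irr_component A T s"
proof -
  have st: "(s, t) \<in> (cartan_edges A T)\<^sup>*" and ts: "(t, s) \<in> (cartan_edges A T)\<^sup>*"
    using assms irr_component_sym[OF assms] by (simp_all add: irr_component_def)
  show ?thesis
    unfolding irr_component_def using rtrancl_trans[OF st] rtrancl_trans[OF ts] by blast
qed

lemma irr_component_subset_filter:
  assumes "s \<in> T" "P (irr_component A T s)"
  shows "irr_component A T s \<subseteq> {t \<in> T. P (irr_component A T t)}"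
proof
  fix t assume t: "t \<in> irr_component A T s"
  then show "t \<in> {t \<in> T. P (irr_component A T t)}"
    using assms irr_component_subset[OF assms(1)] irr_component_eq[OF t] by auto
qed

lemma irr_components_eq_image: "irr_components A T = irr_component A T ` T"
  unfolding irr_components_def irr_component_def[abs_def] by (rule refl)

lemma Union_irr_components_filter:
  "\<Union>{C \<in> irr_components A T. P C} = {s \<in> T. P (irr_component A T s)}"
proof (intro equalityI subsetI)
  fix t assume "t \<in> \<Union>{C \<in> irr_components A T. P C}"
  then obtain C where C: "C \<in> irr_components A T" "P C" "t \<in> C" by blast
  then obtain s where s: "s \<in> T" "C = irr_component A T s"
    unfolding irr_components_eq_image by blast
  have t: "t \<in> irr_component A T s" using C(3) s(2) by simp
  then have "t \<in> T" using irr_component_subset[OF s(1)] by blast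
  moreover have "irr_component A T t = C" using irr_component_eq[OF t] s(2) by simp
  ultimately show "t \<in> {s \<in> T. P (irr_component A T s)}" using C(2) by simp
next
  fix t assume "t \<in> {s \<in> T. P (irr_component A T s)}"
  then have "irr_component A T t \<in> {C \<in> irr_components A T. P C}"
    by (simp add: irr_components_eq_image)
  then show "t \<in> \<Union>{C \<in> irr_components A T. P C}"
    using irr_component_self by (rule UnionI)
qed

lemma cartan_matrixD:
  assumes "cartan_matrix S A" "s \<in> S" "t \<in> S"
  shows "A s s = 2" and "s \<noteq> t \<Longrightarrow> A s t \<le> 0" and "A s t = 0 \<longleftrightarrow> A t s = 0"
  using assms unfolding cartan_matrix_def by auto

lemma left_null_vector_zero_propagates:
  fixes A :: "'s \<Rightarrow> 's \<Rightarrow> real"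
  assumes "finite C" "\<forall>s\<in>C. \<forall>t\<in>C. s \<noteq> t \<longrightarrow> A s t \<le> 0" "\<forall>s\<in>C. 0 \<le> y s"
    and "\<forall>t\<in>C. (\<Sum>s\<in>C. y s * A s t) = 0"
    and "a \<in> C" "b \<in> C" "y a = 0" "A b a \<noteq> 0"
  shows "y b = 0"
proof (cases "b = a")
  case False
  have "(\<Sum>s\<in>C - {a}. - (y s * A s a)) = 0"
    using assms(4,5,7) sum.remove[OF assms(1,5), of "\<lambda>s. y s * A s a"] by (simp add: sum_negf)
  moreover have "\<forall>s\<in>C - {a}. 0 \<le> - (y s * A s a)"
    using assms(2,3,5) by (auto simp: mult_nonneg_nonpos)
  ultimately have "\<forall>s\<in>C - {a}. - (y s * A s a) = 0"
    using sum_nonneg_eq_0_iff[of "C - {a}" "\<lambda>s. - (y s * A s a)"] assms(1) by blast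
  then have "y b * A b a = 0" using assms(6) False by simp
  then show ?thesis using assms(8) by simp
qed (use assms(7) in simp)

lemma left_null_vector_pos_on_irr_component:
  fixes A :: "'s \<Rightarrow> 's \<Rightarrow> real"
  assumes "cartan_matrix S A" "finite S" "T \<subseteq> S" "s0 \<in> T"
    and "\<forall>s\<in>irr_component A T s0. 0 \<le> y s"
    and "\<forall>t\<in>irr_component A T s0. (\<Sum>s\<in>irr_component A T s0. y s * A s t) = 0"
    and "y s0 \<noteq> 0"
  shows "\<forall>t\<in>irr_component A T s0. 0 < y t"
proof
  let ?C = "irr_component A T s0"
  have CS: "?C \<subseteq> S" using irr_component_subset[OF assms(4)] assms(3) by blast
  then have fin: "finite ?C" using finite_subset assms(2) by auto
  have off: "\<forall>s\<in>?C. \<forall>t\<in>?C. s \<noteq> t \<longrightarrow> A s t \<le> 0"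
    using CS cartan_matrixD(2)[OF assms(1)] by blast
  have nz: "\<forall>s\<in>?C. \<forall>t\<in>?C. A s t \<noteq> 0 \<longleftrightarrow> A t s \<noteq> 0"
    using CS cartan_matrixD(3)[OF assms(1)] by blast
  fix t assume t: "t \<in> ?C"
  show "0 < y t"
  proof (rule ccontr)
    assume "\<not> 0 < y t"
    then have "y t = 0" using assms(5) t by force
    have "(t, s0) \<in> (cartan_edges A T)\<^sup>*"
      using irr_component_sym[OF t] by (simp add: irr_component_def)
    moreover have "u \<in> ?C \<and> y u = 0" if "(t, u) \<in> (cartan_edges A T)\<^sup>*" for u
      using that
    proof (induction rule: rtrancl_induct)
      case base
      show ?case using t \<open>y t = 0\<close> by simp
    next
      case (step a b)
      then have a: "a \<in> ?C" "y a = 0" by auto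
      moreover have "b \<in> ?C" using irr_component_edge[OF a(1) step(2)] .
      moreover have "A b a \<noteq> 0" using step(2) nz a(1) \<open>b \<in> ?C\<close> by (auto simp: cartan_edges_def)
      ultimately show ?case using left_null_vector_zero_propagates[OF fin off assms(5,6)] by blast
    qed
    ultimately have "y s0 = 0" by blast
    then show False using assms(7) by simp
  qed
qed

lemma no_nonneg_left_null_vector:
  fixes A :: "'s \<Rightarrow> 's \<Rightarrow> real"
  assumes "cartan_matrix S A" "finite S" "T \<subseteq> S" "U \<subseteq> T"
    and "\<forall>s\<in>U. irr_component A T s \<subseteq> U"
    and "\<forall>s\<in>U. pf_eigenvalue A (irr_component A T s) \<noteq> 0"
    and "\<forall>s\<in>U. 0 \<le> y s" "\<forall>t\<in>U. (\<Sum>s\<in>U. y s * A s t) = 0"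
  shows "\<forall>s\<in>U. y s = 0"
proof (rule ccontr)
  assume "\<not> (\<forall>s\<in>U. y s = 0)"
  then obtain s0 where s0: "s0 \<in> U" "y s0 \<noteq> 0" by blast
  define C where "C = irr_component A T s0"
  have CU: "C \<subseteq> U" using assms(5) s0(1) unfolding C_def by blast
  have US: "U \<subseteq> S" using assms(3,4) by blast
  then have CS: "C \<subseteq> S" using CU by blast
  have finU: "finite U" using finite_subset[OF US assms(2)] .
  have null: "\<forall>t\<in>C. (\<Sum>s\<in>C. y s * A s t) = 0"
  proof
    fix t assume t: "t \<in> C"
    have "A s t = 0" if "s \<in> U - C" for s
    proof (rule ccontr)
      assume "A s t \<noteq> 0"
      then have "(t, s) \<in> cartan_edges A T"
        using that t CU assms(4) by (auto simp: cartan_edges_def)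
      then have "s \<in> C" using irr_component_edge t by (simp add: C_def)
      then show False using that by blast
    qed
    then have "(\<Sum>s\<in>U. y s * A s t) = (\<Sum>s\<in>C. y s * A s t)"
      by (intro sum.mono_neutral_right[OF finU CU]) simp
    then show "(\<Sum>s\<in>C. y s * A s t) = 0" using assms(8) t CU by auto
  qed
  have pos: "\<forall>t\<in>C. 0 < y t"
    using left_null_vector_pos_on_irr_component[OF assms(1-3), of s0 y] s0 CU assms(4,7) null
    by (auto simp: C_def)
  have diag: "\<forall>s\<in>C. A s s = 2" and off: "\<forall>s\<in>C. \<forall>t\<in>C. s \<noteq> t \<longrightarrow> A s t \<le> 0"
    using CS cartan_matrixD(1,2)[OF assms(1)] by blast+
  have "finite C" "C \<noteq> {}"
    using finite_subset[OF CS assms(2)] irr_component_self[of s0 A T] by (auto simp: C_def)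
  then have "pf_eigenvalue A C = 0"
    using pf_eigenvalue_eq_0_if_positive_left_null_vector[OF _ _ diag off pos null] by blast
  then show False using assms(6) s0(1) by (simp add: C_def)
qed

lemma exists_negative_on_irr_components:
  fixes \<alpha> :: "'s \<Rightarrow> 'v::euclidean_space \<Rightarrow> real"
  assumes "coxeter_polytope S \<alpha> v" "T \<subseteq> S" "U \<subseteq> T"
    and "\<forall>s\<in>U. irr_component (cartan_of \<alpha> v) T s \<subseteq> U"
    and "\<forall>s\<in>U. pf_eigenvalue (cartan_of \<alpha> v) (irr_component (cartan_of \<alpha> v) T s) \<noteq> 0"
  shows "\<exists>w\<in>span (v ` U). \<forall>s\<in>U. \<alpha> s w < 0"
proof -
  have finS: "finite S" and lin: "\<forall>s\<in>S. linear (\<alpha> s)" and cartan: "cartan_matrix S (cartan_of \<alpha> v)"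
    using assms(1) unfolding coxeter_polytope_def by auto
  have US: "U \<subseteq> S" using assms(2,3) by blast
  have "\<not> nonneg_dependent_on U \<alpha> (span (v ` U))"
  proof
    assume "nonneg_dependent_on U \<alpha> (span (v ` U))"
    then obtain y where y: "\<forall>s\<in>U. 0 \<le> y s" "\<exists>s\<in>U. y s \<noteq> 0"
      and y0: "\<forall>x\<in>span (v ` U). (\<Sum>s\<in>U. y s * \<alpha> s x) = 0"
      unfolding nonneg_dependent_on_def by blast
    have "\<forall>t\<in>U. (\<Sum>s\<in>U. y s * cartan_of \<alpha> v s t) = 0"
      using y0 by (simp add: cartan_of_def span_base)
    then have "\<forall>s\<in>U. y s = 0"
      using no_nonneg_left_null_vector[OF cartan finS assms(2-5) y(1)] by blast
    with y(2) show False by blast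
  qed
  then show ?thesis
    using gordan_alternative[OF finite_subset[OF US finS] _ subspace_span] US lin by blast
qed

lemma defines_face_diff_irr_components:
  fixes \<alpha> :: "'s \<Rightarrow> 'v::euclidean_space \<Rightarrow> real"
  assumes cox: "coxeter_polytope S \<alpha> v"
    and "T2 \<subseteq> S" "defines_face S \<alpha> (T1 \<union> T2)"
    and "T1 \<subseteq> perp S (cartan_of \<alpha> v) T2"
    and "U \<subseteq> T2" "\<forall>s\<in>U. irr_component (cartan_of \<alpha> v) T2 s \<subseteq> U"
    and "\<forall>s\<in>U. pf_eigenvalue (cartan_of \<alpha> v) (irr_component (cartan_of \<alpha> v) T2 s) \<noteq> 0"
  shows "defines_face S \<alpha> (T1 \<union> T2 - U)"
proof -
  let ?A = "cartan_of \<alpha> v"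
  have finS: "finite S" and lin: "\<forall>s\<in>S. linear (\<alpha> s)"
    using cox unfolding coxeter_polytope_def by auto
  obtain w where w: "w \<in> span (v ` U)" "\<forall>s\<in>U. \<alpha> s w < 0"
    using exists_negative_on_irr_components[OF cox assms(2,5-7)] by blast
  have vanish: "\<alpha> s (v t) = 0" if s: "s \<in> T1 \<union> T2 - U" and t: "t \<in> U" for s t
  proof (cases "s \<in> T1")
    case True
    then show ?thesis using assms(4,5) t by (auto simp: perp_def cartan_of_def)
  next
    case False
    show ?thesis
    proof (rule ccontr)
      assume "\<alpha> s (v t) \<noteq> 0"
      then have "(t, s) \<in> cartan_edges ?A T2"
        using s t False assms(5) by (auto simp: cartan_edges_def cartan_of_def)
      then have "s \<in> irr_component ?A T2 t" by (rule irr_component_edge[OF irr_component_self])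
      then have "s \<in> U" using assms(6) t by blast
      then show False using s by blast
    qed
  qed
  have "\<alpha> s w = 0" if s: "s \<in> T1 \<union> T2 - U" for s
  proof (rule linear_eq_0_on_span[OF _ _ w(1)])
    show "linear (\<alpha> s)" using s lin assms(3) by (auto simp: defines_face_def)
    show "\<And>x. x \<in> v ` U \<Longrightarrow> \<alpha> s x = 0" using vanish s by blast
  qed
  then show ?thesis
    using defines_face_diff[OF finS lin assms(3)] assms(5) w(2) by blast
qed

theorem lemma5p3:
  fixes S :: "'s set" and \<alpha> :: "'s \<Rightarrow> 'v::euclidean_space \<Rightarrow> real" and v :: "'s \<Rightarrow> 'v"
    and T1 T2 :: "'s set"
  assumes "coxeter_polytope S \<alpha> v"
    and "T1 \<subseteq> S" and "T2 \<subseteq> S" and "T1 \<inter> T2 = {}"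
    and "defines_face S \<alpha> (T1 \<union> T2)"
    and "T1 \<subseteq> perp S (cartan_of \<alpha> v) T2"
  shows "defines_face S \<alpha> (T1 \<union> zero_part (cartan_of \<alpha> v) T2) \<and>
         defines_face S \<alpha> (T1 \<union> zero_part (cartan_of \<alpha> v) T2 \<union> pos_part (cartan_of \<alpha> v) T2) \<and>
         defines_face S \<alpha> (T1 \<union> zero_part (cartan_of \<alpha> v) T2 \<union> neg_part (cartan_of \<alpha> v) T2)"
proof -
  let ?A = "cartan_of \<alpha> v"
  let ?pf = "\<lambda>s. pf_eigenvalue ?A (irr_component ?A T2 s)"
  have face: "defines_face S \<alpha> (T1 \<union> T2 - {s \<in> T2. P (?pf s)})" if "\<not> P 0" for P
    using that irr_component_subset_filter[where P = "\<lambda>C. P (pf_eigenvalue ?A C)"]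
    by (intro defines_face_diff_irr_components[OF assms(1,3,5,6)]) auto
  have "T1 \<union> zero_part ?A T2 = T1 \<union> T2 - {s \<in> T2. ?pf s \<noteq> 0}"
    "T1 \<union> zero_part ?A T2 \<union> pos_part ?A T2 = T1 \<union> T2 - {s \<in> T2. ?pf s < 0}"
    "T1 \<union> zero_part ?A T2 \<union> neg_part ?A T2 = T1 \<union> T2 - {s \<in> T2. 0 < ?pf s}"
    unfolding zero_part_def pos_part_def neg_part_def Union_irr_components_filter
    using assms(4) by auto
  then show ?thesis
    using face[of "\<lambda>r. r \<noteq> 0"] face[of "\<lambda>r. r < 0"] face[of "\<lambda>r. 0 < r"] by simp
qed

end
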